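(* Let $u_t+uu_x=A^2(t,x)u_{xx}+A^1(t,x)u_x$ and $\tilde u_{\tilde t}+\tilde u\tilde u_{\tilde x}=\tilde A^2(\tilde t,\tilde x)\tilde u_{\tilde x\tilde x}+\tilde A^1(\tilde t,\tilde x)\tilde u_{\tilde x}$ be two equations of the class $\hat{\mathcal L}$. A point transformation in the space with coordinates $(t,x,u)$ maps the first equation to the second if and only if its components are of the form \[ \tilde t=T,\quad \tilde x=T_tU^1x+X^0,\quad \tilde u=U^1u-U^1_tx+U^0, \] where $T$, $X^0$, $U^0$, $U^1$ are smooth functions of $t$ with $T_tU^1\neq0$ satisfying $U^1_{tt}x-U^0_t=A^1U^1_t$ identically in $(t,x)$, and the arbitrary elements are related by \[ \tilde A^1=U^1A^1-U^1_tx+U^0-\frac{(T_tU^1)_tx+X^0_t}{T_t},\qquad \tilde A^2=T_t(U^1)^2A^2, \] the left-hand sides being evaluated at the new variables and the right-hand sides at $(t,x)$.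
   Context: All functions are smooth. $\hat{\mathcal L}$ denotes the class of equations $u_t+uu_x=A^2(t,x)u_{xx}+A^1(t,x)u_x$ for $u(t,x)$, whose arbitrary elements $A^1$, $A^2$ are smooth functions of $(t,x)$ with $A^2\neq0$ (superscripts on $A$ are indices, not exponents). *)

theory Defs
  imports "HOL-Analysis.Analysis"
begin

coinductive smooth1 :: "(real \<Rightarrow> real) \<Rightarrow> bool" where
  "(\<forall>t. f differentiable (at t)) \<Longrightarrow> smooth1 (deriv f) \<Longrightarrow> smooth1 f"

definition pd1_2 :: "(real \<Rightarrow> real \<Rightarrow> real) \<Rightarrow> real \<Rightarrow> real \<Rightarrow> real" where
  "pd1_2 f t x = deriv (\<lambda>a. f a x) t"
definition pd2_2 :: "(real \<Rightarrow> real \<Rightarrow> real) \<Rightarrow> real \<Rightarrow> real \<Rightarrow> real" where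
  "pd2_2 f t x = deriv (\<lambda>a. f t a) x"

coinductive smooth2 :: "(real \<Rightarrow> real \<Rightarrow> real) \<Rightarrow> bool" where
  "(\<forall>z. (\<lambda>(t, x). f t x) differentiable (at z)) \<Longrightarrow>
   smooth2 (pd1_2 f) \<Longrightarrow> smooth2 (pd2_2 f) \<Longrightarrow> smooth2 f"

definition pt :: "(real \<Rightarrow> real \<Rightarrow> real \<Rightarrow> real) \<Rightarrow> real \<Rightarrow> real \<Rightarrow> real \<Rightarrow> real" where
  "pt F t x u = deriv (\<lambda>a. F a x u) t"
definition px :: "(real \<Rightarrow> real \<Rightarrow> real \<Rightarrow> real) \<Rightarrow> real \<Rightarrow> real \<Rightarrow> real \<Rightarrow> real" where
  "px F t x u = deriv (\<lambda>a. F t a u) x"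
definition pu :: "(real \<Rightarrow> real \<Rightarrow> real \<Rightarrow> real) \<Rightarrow> real \<Rightarrow> real \<Rightarrow> real \<Rightarrow> real" where
  "pu F t x u = deriv (\<lambda>a. F t x a) u"

coinductive smooth3 :: "(real \<Rightarrow> real \<Rightarrow> real \<Rightarrow> real) \<Rightarrow> bool" where
  "(\<forall>z. (\<lambda>(t, x, u). f t x u) differentiable (at z)) \<Longrightarrow>
   smooth3 (pt f) \<Longrightarrow> smooth3 (px f) \<Longrightarrow> smooth3 (pu f) \<Longrightarrow> smooth3 f"

definition in_class_L :: "(real \<Rightarrow> real \<Rightarrow> real) \<Rightarrow> (real \<Rightarrow> real \<Rightarrow> real) \<Rightarrow> bool" where
  "in_class_L A1 A2 \<longleftrightarrow> smooth2 A1 \<and> smooth2 A2 \<and> (\<forall>t x. A2 t x \<noteq> 0)"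

definition point_transformation ::
  "(real \<Rightarrow> real \<Rightarrow> real \<Rightarrow> real) \<Rightarrow> (real \<Rightarrow> real \<Rightarrow> real \<Rightarrow> real) \<Rightarrow>
   (real \<Rightarrow> real \<Rightarrow> real \<Rightarrow> real) \<Rightarrow> bool" where
  "point_transformation T X U \<longleftrightarrow> smooth3 T \<and> smooth3 X \<and> smooth3 U \<and>
     (\<forall>t x u.
        pt T t x u * (px X t x u * pu U t x u - pu X t x u * px U t x u)
      - px T t x u * (pt X t x u * pu U t x u - pu X t x u * pt U t x u)
      + pu T t x u * (pt X t x u * px U t x u - px X t x u * pt U t x u) \<noteq> 0)"

text \<open>Total derivatives of F(t,x,u) at the first-order jet (t,x,u,p,q), p = u_t, q = u_x.\<close>
definition Dt1 :: "(real \<Rightarrow> real \<Rightarrow> real \<Rightarrow> real) \<Rightarrow> real \<Rightarrow> real \<Rightarrow> real \<Rightarrow> real \<Rightarrow> real \<Rightarrow> real" where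
  "Dt1 F t x u p q = pt F t x u + p * pu F t x u"
definition Dx1 :: "(real \<Rightarrow> real \<Rightarrow> real \<Rightarrow> real) \<Rightarrow> real \<Rightarrow> real \<Rightarrow> real \<Rightarrow> real \<Rightarrow> real \<Rightarrow> real" where
  "Dx1 F t x u p q = px F t x u + q * pu F t x u"

text \<open>Total derivatives of a first-order differential function G(t,x,u,p,q) at the
  second-order jet (t,x,u,p,q,r,s,w), r = u_tt, s = u_tx, w = u_xx.\<close>
definition TDt :: "(real \<Rightarrow> real \<Rightarrow> real \<Rightarrow> real \<Rightarrow> real \<Rightarrow> real) \<Rightarrow>
    real \<Rightarrow> real \<Rightarrow> real \<Rightarrow> real \<Rightarrow> real \<Rightarrow> real \<Rightarrow> real \<Rightarrow> real \<Rightarrow> real" where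
  "TDt G t x u p q r s w =
     deriv (\<lambda>a. G a x u p q) t + p * deriv (\<lambda>a. G t x a p q) u
   + r * deriv (\<lambda>a. G t x u a q) p + s * deriv (\<lambda>a. G t x u p a) q"
definition TDx :: "(real \<Rightarrow> real \<Rightarrow> real \<Rightarrow> real \<Rightarrow> real \<Rightarrow> real) \<Rightarrow>
    real \<Rightarrow> real \<Rightarrow> real \<Rightarrow> real \<Rightarrow> real \<Rightarrow> real \<Rightarrow> real \<Rightarrow> real \<Rightarrow> real" where
  "TDx G t x u p q r s w =
     deriv (\<lambda>a. G t a u p q) x + q * deriv (\<lambda>a. G t x a p q) u
   + s * deriv (\<lambda>a. G t x u a q) p + w * deriv (\<lambda>a. G t x u p a) q"

definition jacD :: "(real \<Rightarrow> real \<Rightarrow> real \<Rightarrow> real) \<Rightarrow> (real \<Rightarrow> real \<Rightarrow> real \<Rightarrow> real) \<Rightarrow>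
    real \<Rightarrow> real \<Rightarrow> real \<Rightarrow> real \<Rightarrow> real \<Rightarrow> real" where
  "jacD T X t x u p q = Dt1 T t x u p q * Dx1 X t x u p q - Dx1 T t x u p q * Dt1 X t x u p q"

definition newUt :: "(real \<Rightarrow> real \<Rightarrow> real \<Rightarrow> real) \<Rightarrow> (real \<Rightarrow> real \<Rightarrow> real \<Rightarrow> real) \<Rightarrow>
    (real \<Rightarrow> real \<Rightarrow> real \<Rightarrow> real) \<Rightarrow> real \<Rightarrow> real \<Rightarrow> real \<Rightarrow> real \<Rightarrow> real \<Rightarrow> real" where
  "newUt T X U t x u p q =
     (Dt1 U t x u p q * Dx1 X t x u p q - Dx1 U t x u p q * Dt1 X t x u p q) / jacD T X t x u p q"
definition newUx :: "(real \<Rightarrow> real \<Rightarrow> real \<Rightarrow> real) \<Rightarrow> (real \<Rightarrow> real \<Rightarrow> real \<Rightarrow> real) \<Rightarrow>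
    (real \<Rightarrow> real \<Rightarrow> real \<Rightarrow> real) \<Rightarrow> real \<Rightarrow> real \<Rightarrow> real \<Rightarrow> real \<Rightarrow> real \<Rightarrow> real" where
  "newUx T X U t x u p q =
     (Dt1 T t x u p q * Dx1 U t x u p q - Dx1 T t x u p q * Dt1 U t x u p q) / jacD T X t x u p q"

text \<open>Transformed second derivative u~_x~x~ as a function of the second-order jet
  (solving D_t(u~_x~) = u~_t~x~ D_t T + u~_x~x~ D_t X, D_x(u~_x~) = u~_t~x~ D_x T + u~_x~x~ D_x X).\<close>
definition newUxx :: "(real \<Rightarrow> real \<Rightarrow> real \<Rightarrow> real) \<Rightarrow> (real \<Rightarrow> real \<Rightarrow> real \<Rightarrow> real) \<Rightarrow>
    (real \<Rightarrow> real \<Rightarrow> real \<Rightarrow> real) \<Rightarrow>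
    real \<Rightarrow> real \<Rightarrow> real \<Rightarrow> real \<Rightarrow> real \<Rightarrow> real \<Rightarrow> real \<Rightarrow> real \<Rightarrow> real" where
  "newUxx T X U t x u p q r s w =
     (Dt1 T t x u p q * TDx (newUx T X U) t x u p q r s w
    - Dx1 T t x u p q * TDt (newUx T X U) t x u p q r s w) / jacD T X t x u p q"

text \<open>The point transformation (T,X,U) maps the equation with arbitrary elements (A1,A2)
  to the equation with arbitrary elements (B1,B2): its second prolongation maps every
  (transversal) point of the equation manifold
  p + u q = A2(t,x) w + A1(t,x) q  (p=u_t, q=u_x, w=u_xx; r=u_tt, s=u_tx free)
  to a point of the target equation manifold.\<close>
definition maps_equation ::
  "(real \<Rightarrow> real \<Rightarrow> real \<Rightarrow> real) \<Rightarrow> (real \<Rightarrow> real \<Rightarrow> real \<Rightarrow> real) \<Rightarrow>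
   (real \<Rightarrow> real \<Rightarrow> real \<Rightarrow> real) \<Rightarrow>
   (real \<Rightarrow> real \<Rightarrow> real) \<Rightarrow> (real \<Rightarrow> real \<Rightarrow> real) \<Rightarrow>
   (real \<Rightarrow> real \<Rightarrow> real) \<Rightarrow> (real \<Rightarrow> real \<Rightarrow> real) \<Rightarrow> bool" where
  "maps_equation T X U A1 A2 B1 B2 \<longleftrightarrow>
     (\<forall>t x u p q r s w.
        jacD T X t x u p q \<noteq> 0 \<longrightarrow>
        p + u * q = A2 t x * w + A1 t x * q \<longrightarrow>
        newUt T X U t x u p q + U t x u * newUx T X U t x u p q
          = B2 (T t x u) (X t x u) * newUxx T X U t x u p q r s w
          + B1 (T t x u) (X t x u) * newUx T X U t x u p q)"

end

theory Submission
  imports Defs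
begin

text \<open>
  Write \<open>p, q, r, w\<close> for the jet variables \<open>u\<^sub>t, u\<^sub>x, u\<^sub>t\<^sub>t, u\<^sub>x\<^sub>x\<close>. On the equation manifold
  \<open>p\<close> is determined by the others, which are free, so the transformed equation must hold
  identically in \<open>q, r, w\<close>. The variable \<open>r\<close> enters only through the total \<open>t\<close>-derivative
  of the new \<open>u\<^sub>x\<close>, with the factor \<open>(D\<^sub>x T)\<^sup>2\<close>; hence \<open>T\<^sub>x = T\<^sub>u = 0\<close>. The coefficient of \<open>w\<close>
  then gives \<open>A2 (X\<^sub>x + q X\<^sub>u)\<^sup>2 = T\<^sub>t B2\<close> for all \<open>q\<close>, so \<open>X\<^sub>u = 0\<close> and \<open>B2 = T\<^sub>t U\<^sub>u\<^sup>2 A2\<close>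
  once \<open>X\<^sub>x = T\<^sub>t U\<^sub>u\<close> is known. What remains is quadratic in \<open>q\<close>: the leading coefficient
  gives \<open>U\<^sub>u\<^sub>u = 0\<close>, and splitting the other two coefficients, now polynomial in \<open>u\<close>, yields
  \<open>X\<^sub>x = T\<^sub>t U\<^sub>u\<close>, \<open>U\<^sub>u\<^sub>x = 0\<close> and \<open>U\<^sub>x = - U\<^sub>u\<^sub>t\<close>; these integrate to the normal form.
  Conversely, for a transformation in normal form the transformed equation is, up to a
  nonzero factor, affine in \<open>u\<^sub>x\<^sub>x\<close> and \<open>u\<^sub>x\<close>, and its three coefficients vanish exactly under
  the stated conditions.
\<close>

lemma smooth3_partials:
  assumes "smooth3 F"
  shows "smooth3 (pt F)" "smooth3 (px F)" "smooth3 (pu F)"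
  using assms by (auto elim: smooth3.cases)

lemma smooth3_differentiable_along:
  assumes "smooth3 F" and "\<gamma> differentiable (at s)"
  shows "(\<lambda>a. (\<lambda>(t, x, u). F t x u) (\<gamma> a)) differentiable (at s)"
  using differentiable_chain_at[OF assms(2), of "\<lambda>(t, x, u). F t x u"] assms(1)
  by (auto elim: smooth3.cases simp: o_def)

lemma smooth3_DERIV_t:
  assumes "smooth3 F"
  shows "((\<lambda>a. F a x u) has_real_derivative pt F t x u) (at t)"
  using smooth3_differentiable_along[OF assms, of "\<lambda>a. (a, x, u)" t]
  unfolding pt_def by (simp add: DERIV_deriv_iff_real_differentiable)

lemma smooth3_DERIV_x:
  assumes "smooth3 F"
  shows "((\<lambda>a. F t a u) has_real_derivative px F t x u) (at x)"
  using smooth3_differentiable_along[OF assms, of "\<lambda>a. (t, a, u)" x]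
  unfolding px_def by (simp add: DERIV_deriv_iff_real_differentiable)

lemma smooth3_DERIV_u:
  assumes "smooth3 F"
  shows "((\<lambda>a. F t x a) has_real_derivative pu F t x u) (at u)"
  using smooth3_differentiable_along[OF assms, of "\<lambda>a. (t, x, a)" u]
  unfolding pu_def by (simp add: DERIV_deriv_iff_real_differentiable)

lemma smooth3_affine_x:
  assumes "smooth3 F" and "\<And>y. px F t y u = c"
  shows "F t x u = c * x + F t 0 u"
proof -
  have "F t x u - c * x = F t 0 u - c * 0"
  proof (rule DERIV_isconst_all[of "\<lambda>y. F t y u - c * y"], intro allI)
    fix y
    have "((\<lambda>y. F t y u - c * y) has_real_derivative px F t y u - c * 1) (at y)"
      by (intro DERIV_diff DERIV_cmult DERIV_ident smooth3_DERIV_x assms(1))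
    then show "((\<lambda>y. F t y u - c * y) has_real_derivative 0) (at y)"
      by (simp add: assms(2))
  qed
  thus ?thesis by simp
qed

lemma smooth3_affine_u:
  assumes "smooth3 F" and "\<And>v. pu F t x v = c"
  shows "F t x u = c * u + F t x 0"
proof -
  have "F t x u - c * u = F t x 0 - c * 0"
  proof (rule DERIV_isconst_all[of "\<lambda>v. F t x v - c * v"], intro allI)
    fix v
    have "((\<lambda>v. F t x v - c * v) has_real_derivative pu F t x v - c * 1) (at v)"
      by (intro DERIV_diff DERIV_cmult DERIV_ident smooth3_DERIV_u assms(1))
    then show "((\<lambda>v. F t x v - c * v) has_real_derivative 0) (at v)"
      by (simp add: assms(2))
  qed
  thus ?thesis by simp
qed

lemma smooth3_imp_smooth1_t:
  assumes "smooth3 F"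
  shows "smooth1 (\<lambda>t. F t x u)"
  using assms
proof (coinduction arbitrary: F)
  case smooth1
  have "deriv (\<lambda>t. F t x u) = (\<lambda>t. pt F t x u)"
    unfolding pt_def by simp
  with smooth1 show ?case
    using smooth3_DERIV_t smooth3_partials(1) real_differentiable_def by metis
qed

lemma smooth1_DERIV:
  assumes "smooth1 f"
  shows "(f has_real_derivative deriv f t) (at t)"
  using assms DERIV_deriv_iff_real_differentiable by (auto elim: smooth1.cases)

lemma smooth1_deriv:
  assumes "smooth1 f"
  shows "smooth1 (deriv f)"
  using assms by (auto elim: smooth1.cases)

lemma pt_eq_if_sections_eq: "(\<And>s. F s x u = F s x v) \<Longrightarrow> pt F t x u = pt F t x v"
  by (simp add: pt_def)

lemma px_eq_if_sections_eq: "(\<And>y. F t y u = F t y v) \<Longrightarrow> px F t x u = px F t x v"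
  by (simp add: px_def)

lemma px_eq_0_if_constant: "(\<And>y. F t y u = c) \<Longrightarrow> px F t x u = 0"
  by (simp add: px_def)

lemma pu_eq_0_if_constant: "(\<And>v. F t x v = c) \<Longrightarrow> pu F t x u = 0"
  by (simp add: pu_def)

lemma affine_combination_eq_zero_iff:
  fixes a b c k m n :: real
  assumes "k \<noteq> 0" and "n \<noteq> 0"
  shows "(\<forall>q w. w * a + (q * k - m) * b + n * c = 0) \<longleftrightarrow> a = 0 \<and> b = 0 \<and> c = 0"
proof
  assume vanish: "\<forall>q w. w * a + (q * k - m) * b + n * c = 0"
  have c: "c = 0" using vanish[rule_format, where q = "m / k" and w = 0] assms by simp
  have a: "a = 0" using vanish[rule_format, where q = "m / k" and w = 1] assms c by simp
  have "b = 0" using vanish[rule_format, where q = "m / k + 1" and w = 0] assms c by (simp add: field_simps)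
  with a c show "a = 0 \<and> b = 0 \<and> c = 0" by simp
qed simp

lemma affine_zero_outside_line:
  fixes \<alpha> \<beta> \<gamma> a b :: real
  assumes vanish: "\<And>p q. \<alpha> + p * \<beta> + q * \<gamma> \<noteq> 0 \<Longrightarrow> a + q * b = 0"
    and line: "\<alpha> \<noteq> 0 \<or> \<beta> \<noteq> 0 \<or> \<gamma> \<noteq> 0"
  shows "a = 0 \<and> b = 0"
proof -
  obtain q1 q2 where q: "q1 \<noteq> q2" "a + q1 * b = 0" "a + q2 * b = 0"
  proof (cases "\<beta> = 0")
    case False
    then show ?thesis
      using that[of 0 1] vanish[of "(1 - \<alpha>) / \<beta>" 0] vanish[of "(1 - \<alpha> - \<gamma>) / \<beta>" 1] by simp
  next
    case True
    show ?thesis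
    proof (cases "\<gamma> = 0")
      case True
      then show ?thesis using that[of 0 1] vanish[of 0 0] vanish[of 0 1] line \<open>\<beta> = 0\<close> by simp
    next
      case False
      then show ?thesis
        using that[of "1 - \<alpha> / \<gamma>" "2 - \<alpha> / \<gamma>"] vanish[of 0 "1 - \<alpha> / \<gamma>"] vanish[of 0 "2 - \<alpha> / \<gamma>"]
        by (simp add: field_simps)
    qed
  qed
  have "(q1 - q2) * b = (a + q1 * b) - (a + q2 * b)" by (simp add: algebra_simps)
  with q have "b = 0" by simp
  with q show ?thesis by simp
qed

lemma slope_eq_0_if_square_constant:
  fixes k c a b :: real
  assumes const: "\<And>q. a + q * b \<noteq> 0 \<Longrightarrow> k * (a + q * b)\<^sup>2 = c" and "k \<noteq> 0"
  shows "b = 0"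
proof (rule ccontr)
  assume "b \<noteq> 0"
  then have "a + (1 - a / b) * b = b" "a + (2 - a / b) * b = 2 * b"
    by (simp_all add: field_simps)
  with \<open>b \<noteq> 0\<close> have "k * b\<^sup>2 = c" "k * (2 * b)\<^sup>2 = c"
    using const[of "1 - a / b"] const[of "2 - a / b"] by auto
  then have "3 * (k * b\<^sup>2) = 0" by (simp add: power2_eq_square algebra_simps)
  with \<open>b \<noteq> 0\<close> \<open>k \<noteq> 0\<close> show False by simp
qed

lemma quadratic_coefficients_eq_0:
  fixes a b c :: real
  assumes "\<And>q. a * q\<^sup>2 + b * q + c = 0"
  shows "a = 0" "b = 0" "c = 0"
  using assms[of 0] assms[of 1] assms[of "-1"] by simp_all

lemma DERIV_affine_ratio:
  fixes m n c d a :: real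
  assumes "c + a * d \<noteq> 0"
  shows "((\<lambda>a. (m + a * n) / (c + a * d)) has_real_derivative (n * c - m * d) / (c + a * d)\<^sup>2) (at a)"
proof -
  have "((\<lambda>a. (m + a * n) / (c + a * d)) has_real_derivative
      (n * (c + a * d) - (m + a * n) * d) / ((c + a * d) * (c + a * d))) (at a)"
    using assms by (intro DERIV_divide) (auto intro!: derivative_eq_intros)
  then show ?thesis by (simp add: power2_eq_square algebra_simps)
qed

section \<open>Prolongation formulas\<close>

definition jacobian_det ::
  "(real \<Rightarrow> real \<Rightarrow> real \<Rightarrow> real) \<Rightarrow> (real \<Rightarrow> real \<Rightarrow> real \<Rightarrow> real) \<Rightarrow>
   (real \<Rightarrow> real \<Rightarrow> real \<Rightarrow> real) \<Rightarrow> real \<Rightarrow> real \<Rightarrow> real \<Rightarrow> real" where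
  "jacobian_det T X U t x u =
        pt T t x u * (px X t x u * pu U t x u - pu X t x u * px U t x u)
      - px T t x u * (pt X t x u * pu U t x u - pu X t x u * pt U t x u)
      + pu T t x u * (pt X t x u * px U t x u - px X t x u * pt U t x u)"

lemma point_transformation_iff:
  "point_transformation T X U \<longleftrightarrow>
     smooth3 T \<and> smooth3 X \<and> smooth3 U \<and> (\<forall>t x u. jacobian_det T X U t x u \<noteq> 0)"
  unfolding point_transformation_def jacobian_det_def ..

lemma jacD_affine:
  "jacD T X t x u p q =
     (pt T t x u * px X t x u - px T t x u * pt X t x u)
   + p * (pu T t x u * px X t x u - px T t x u * pu X t x u)
   + q * (pt T t x u * pu X t x u - pu T t x u * pt X t x u)"
  unfolding jacD_def Dt1_def Dx1_def by (simp add: algebra_simps)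

lemma jacobian_det_eq:
  "jacobian_det T X U t x u =
     pu U t x u * (pt T t x u * px X t x u - px T t x u * pt X t x u)
   - pt U t x u * (pu T t x u * px X t x u - px T t x u * pu X t x u)
   - px U t x u * (pt T t x u * pu X t x u - pu T t x u * pt X t x u)"
  unfolding jacobian_det_def by (simp add: algebra_simps)

lemma deriv_newUx_p:
  assumes "jacD T X t x u p q \<noteq> 0"
  shows "deriv (\<lambda>a. newUx T X U t x u a q) p
    = - Dx1 T t x u p q * jacobian_det T X U t x u / (jacD T X t x u p q)\<^sup>2"
proof (rule DERIV_imp_deriv)
  define m n c d where
    "m = pt T t x u * Dx1 U t x u p q - Dx1 T t x u p q * pt U t x u"
    and "n = pu T t x u * Dx1 U t x u p q - Dx1 T t x u p q * pu U t x u"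
    and "c = pt T t x u * Dx1 X t x u p q - Dx1 T t x u p q * pt X t x u"
    and "d = pu T t x u * Dx1 X t x u p q - Dx1 T t x u p q * pu X t x u"
  have "newUx T X U t x u a q = (m + a * n) / (c + a * d)" for a
    unfolding newUx_def jacD_def Dt1_def m_def n_def c_def d_def
    by (simp add: Dx1_def algebra_simps)
  then have newUx: "(\<lambda>a. newUx T X U t x u a q) = (\<lambda>a. (m + a * n) / (c + a * d))"
    by simp
  have jacD: "jacD T X t x u p q = c + p * d"
    unfolding jacD_def Dt1_def c_def d_def by (simp add: algebra_simps)
  have "n * c - m * d = - Dx1 T t x u p q * jacobian_det T X U t x u"
    unfolding m_def n_def c_def d_def jacobian_det_def Dx1_def by (simp add: algebra_simps)
  with DERIV_affine_ratio[of c p d m n] assms show "((\<lambda>a. newUx T X U t x u a q) has_real_derivative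
      - Dx1 T t x u p q * jacobian_det T X U t x u / (jacD T X t x u p q)\<^sup>2) (at p)"
    unfolding newUx jacD by simp
qed

lemma newUxx_r_slope:
  "newUxx T X U t x u p q 1 s w - newUxx T X U t x u p q 0 s w
    = - Dx1 T t x u p q * deriv (\<lambda>a. newUx T X U t x u a q) p / jacD T X t x u p q"
proof -
  have "TDt (newUx T X U) t x u p q 1 s w
      = TDt (newUx T X U) t x u p q 0 s w + deriv (\<lambda>a. newUx T X U t x u a q) p"
    and "TDx (newUx T X U) t x u p q 1 s w = TDx (newUx T X U) t x u p q 0 s w"
    unfolding TDt_def TDx_def by simp_all
  then show ?thesis
    unfolding newUxx_def by (simp add: diff_divide_distrib[symmetric] algebra_simps)
qed

section \<open>Transformations in normal form\<close>

definition in_normal_form ::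
  "(real \<Rightarrow> real) \<Rightarrow> (real \<Rightarrow> real) \<Rightarrow> (real \<Rightarrow> real) \<Rightarrow> (real \<Rightarrow> real) \<Rightarrow>
   (real \<Rightarrow> real \<Rightarrow> real \<Rightarrow> real) \<Rightarrow> (real \<Rightarrow> real \<Rightarrow> real \<Rightarrow> real) \<Rightarrow>
   (real \<Rightarrow> real \<Rightarrow> real \<Rightarrow> real) \<Rightarrow> bool" where
  "in_normal_form Tf X0 U0 U1 T X U \<longleftrightarrow>
     (\<forall>t x u. T t x u = Tf t \<and>
              X t x u = deriv Tf t * U1 t * x + X0 t \<and>
              U t x u = U1 t * u - deriv U1 t * x + U0 t)"

definition equivalence_conditions ::
  "(real \<Rightarrow> real) \<Rightarrow> (real \<Rightarrow> real) \<Rightarrow> (real \<Rightarrow> real) \<Rightarrow> (real \<Rightarrow> real) \<Rightarrow>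
   (real \<Rightarrow> real \<Rightarrow> real) \<Rightarrow> (real \<Rightarrow> real \<Rightarrow> real) \<Rightarrow>
   (real \<Rightarrow> real \<Rightarrow> real) \<Rightarrow> (real \<Rightarrow> real \<Rightarrow> real) \<Rightarrow> bool" where
  "equivalence_conditions Tf X0 U0 U1 A1 A2 B1 B2 \<longleftrightarrow>
     (\<forall>t x. deriv (deriv U1) t * x - deriv U0 t = A1 t x * deriv U1 t) \<and>
     (\<forall>t x. B1 (Tf t) (deriv Tf t * U1 t * x + X0 t)
              = U1 t * A1 t x - deriv U1 t * x + U0 t
                - (deriv (\<lambda>s. deriv Tf s * U1 s) t * x + deriv X0 t) / deriv Tf t) \<and>
     (\<forall>t x. B2 (Tf t) (deriv Tf t * U1 t * x + X0 t) = deriv Tf t * (U1 t)\<^sup>2 * A2 t x)"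

locale normal_form =
  fixes Tf X0 U0 U1 :: "real \<Rightarrow> real"
    and T X U :: "real \<Rightarrow> real \<Rightarrow> real \<Rightarrow> real"
  assumes smooth: "smooth1 Tf" "smooth1 X0" "smooth1 U0" "smooth1 U1"
    and nondegenerate: "deriv Tf t * U1 t \<noteq> 0"
    and components: "in_normal_form Tf X0 U0 U1 T X U"
begin

lemma deriv_Tf_nonzero: "deriv Tf t \<noteq> 0" and U1_nonzero: "U1 t \<noteq> 0"
  using nondegenerate[of t] by auto

lemma components_eq:
  "T = (\<lambda>t x u. Tf t)"
  "X = (\<lambda>t x u. deriv Tf t * U1 t * x + X0 t)"
  "U = (\<lambda>t x u. U1 t * u - deriv U1 t * x + U0 t)"
  using components unfolding in_normal_form_def by (auto simp: fun_eq_iff)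

lemma partials:
  "pt T t x u = deriv Tf t" "px T t x u = 0" "pu T t x u = 0"
  "pt X t x u = deriv (\<lambda>s. deriv Tf s * U1 s) t * x + deriv X0 t"
  "px X t x u = deriv Tf t * U1 t" "pu X t x u = 0"
  "pt U t x u = deriv U1 t * u - deriv (deriv U1) t * x + deriv U0 t"
  "px U t x u = - deriv U1 t" "pu U t x u = U1 t"
proof -
  note DERIV = smooth1_DERIV[OF smooth(1)] smooth1_DERIV[OF smooth1_deriv[OF smooth(1)]]
    smooth1_DERIV[OF smooth(2)] smooth1_DERIV[OF smooth(3)] smooth1_DERIV[OF smooth(4)]
    smooth1_DERIV[OF smooth1_deriv[OF smooth(4)]]
  have "(\<lambda>s. deriv Tf s * U1 s) differentiable (at t)"
    using DERIV real_differentiable_def by (metis differentiable_mult)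
  then have "((\<lambda>s. deriv Tf s * U1 s * x + X0 s) has_real_derivative
      deriv (\<lambda>s. deriv Tf s * U1 s) t * x + deriv X0 t) (at t)"
    by (intro DERIV_add DERIV_cmult_right DERIV DERIV_deriv_iff_real_differentiable[THEN iffD2])
  then show "pt X t x u = deriv (\<lambda>s. deriv Tf s * U1 s) t * x + deriv X0 t"
    unfolding pt_def components_eq by (rule DERIV_imp_deriv)
  have "((\<lambda>s. U1 s * u - deriv U1 s * x + U0 s) has_real_derivative
      deriv U1 t * u - deriv (deriv U1) t * x + deriv U0 t) (at t)"
    by (auto intro!: derivative_eq_intros DERIV)
  then show "pt U t x u = deriv U1 t * u - deriv (deriv U1) t * x + deriv U0 t"
    unfolding pt_def components_eq by (rule DERIV_imp_deriv)
  have "((\<lambda>y. deriv Tf t * U1 t * y + X0 t) has_real_derivative deriv Tf t * U1 t) (at x)"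
    "((\<lambda>y. U1 t * u - deriv U1 t * y + U0 t) has_real_derivative - deriv U1 t) (at x)"
    "((\<lambda>v. U1 t * v - deriv U1 t * x + U0 t) has_real_derivative U1 t) (at u)"
    by (auto intro!: derivative_eq_intros)
  then show "px X t x u = deriv Tf t * U1 t" "px U t x u = - deriv U1 t" "pu U t x u = U1 t"
    unfolding px_def pu_def components_eq by (auto intro: DERIV_imp_deriv)
  show "pt T t x u = deriv Tf t" "px T t x u = 0" "pu T t x u = 0" "pu X t x u = 0"
    unfolding pt_def px_def pu_def components_eq by simp_all
qed

lemma jacD_eq: "jacD T X t x u p q = deriv Tf t * (deriv Tf t * U1 t)"
  unfolding jacD_def Dt1_def Dx1_def partials by simp

lemma newUx_eq: "newUx T X U = (\<lambda>t x u p q. (q * U1 t - deriv U1 t) / (deriv Tf t * U1 t))"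
  using deriv_Tf_nonzero U1_nonzero
  by (intro ext) (simp add: newUx_def jacD_eq Dt1_def Dx1_def partials field_simps)

lemma newUt_eq:
  "newUt T X U t x u p q =
     ((deriv U1 t * u - deriv (deriv U1) t * x + deriv U0 t + p * U1 t) * (deriv Tf t * U1 t)
      - (q * U1 t - deriv U1 t) * (deriv (\<lambda>s. deriv Tf s * U1 s) t * x + deriv X0 t))
     / (deriv Tf t * (deriv Tf t * U1 t))"
  by (simp add: newUt_def jacD_eq Dt1_def Dx1_def partials algebra_simps)

lemma newUxx_eq: "newUxx T X U t x u p q r s w = w / (deriv Tf t * (deriv Tf t * U1 t))"
proof -
  have "((\<lambda>q. (q * U1 t - deriv U1 t) / (deriv Tf t * U1 t)) has_real_derivative 1 / deriv Tf t) (at q)"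
    using deriv_Tf_nonzero U1_nonzero by (auto intro!: derivative_eq_intros simp: field_simps)
  then have "TDx (newUx T X U) t x u p q r s w = w / deriv Tf t"
    unfolding TDx_def newUx_eq by (simp add: DERIV_imp_deriv)
  then show ?thesis
    unfolding newUxx_def jacD_eq Dt1_def Dx1_def partials
    using deriv_Tf_nonzero U1_nonzero by (simp add: field_simps)
qed

definition B2_defect :: "(real \<Rightarrow> real \<Rightarrow> real) \<Rightarrow> (real \<Rightarrow> real \<Rightarrow> real) \<Rightarrow> real \<Rightarrow> real \<Rightarrow> real" where
  "B2_defect A2 B2 t x = deriv Tf t * (U1 t)\<^sup>2 * A2 t x - B2 (Tf t) (deriv Tf t * U1 t * x + X0 t)"

definition B1_defect :: "(real \<Rightarrow> real \<Rightarrow> real) \<Rightarrow> (real \<Rightarrow> real \<Rightarrow> real) \<Rightarrow> real \<Rightarrow> real \<Rightarrow> real" where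
  "B1_defect A1 B1 t x = deriv Tf t * U1 t * A1 t x - (deriv (\<lambda>s. deriv Tf s * U1 s) t * x + deriv X0 t)
     + deriv Tf t * (U0 t - deriv U1 t * x - B1 (Tf t) (deriv Tf t * U1 t * x + X0 t))"

definition U0_defect :: "(real \<Rightarrow> real \<Rightarrow> real) \<Rightarrow> real \<Rightarrow> real \<Rightarrow> real" where
  "U0_defect A1 t x = deriv U0 t - deriv (deriv U1) t * x + A1 t x * deriv U1 t"

lemma equation_residual:
  assumes "p + u * q = A2 t x * w + A1 t x * q"
  shows "newUt T X U t x u p q + U t x u * newUx T X U t x u p q
      - (B2 (T t x u) (X t x u) * newUxx T X U t x u p q r s w + B1 (T t x u) (X t x u) * newUx T X U t x u p q)
    = (w * B2_defect A2 B2 t x + (q * U1 t - deriv U1 t) * B1_defect A1 B1 t x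
       + deriv Tf t * U1 t * U0_defect A1 t x) / (deriv Tf t * (deriv Tf t * U1 t))"
proof -
  have p: "p = A2 t x * w + A1 t x * q - u * q" using assms by simp
  show ?thesis
    unfolding newUt_eq newUx_eq newUxx_eq p B2_defect_def B1_defect_def U0_defect_def
    using deriv_Tf_nonzero[of t] U1_nonzero[of t]
    by (simp add: components_eq field_simps power2_eq_square)
qed

lemma maps_equation_iff_defects_eq_0:
  "maps_equation T X U A1 A2 B1 B2 \<longleftrightarrow>
     (\<forall>t x. B2_defect A2 B2 t x = 0 \<and> B1_defect A1 B1 t x = 0 \<and> U0_defect A1 t x = 0)"
proof -
  have "maps_equation T X U A1 A2 B1 B2 \<longleftrightarrow>
      (\<forall>t x q w. w * B2_defect A2 B2 t x + (q * U1 t - deriv U1 t) * B1_defect A1 B1 t x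
         + deriv Tf t * U1 t * U0_defect A1 t x = 0)"
    (is "_ \<longleftrightarrow> (\<forall>t x q w. ?residual t x q w = 0)")
  proof
    assume maps: "maps_equation T X U A1 A2 B1 B2"
    show "\<forall>t x q w. ?residual t x q w = 0"
    proof (intro allI)
      fix t x q w
      let ?p = "A2 t x * w + A1 t x * q"
      have constraint: "?p + 0 * q = A2 t x * w + A1 t x * q" by simp
      have "jacD T X t x 0 ?p q \<noteq> 0"
        using deriv_Tf_nonzero U1_nonzero by (simp add: jacD_eq)
      with maps constraint have "newUt T X U t x 0 ?p q + U t x 0 * newUx T X U t x 0 ?p q
          = B2 (T t x 0) (X t x 0) * newUxx T X U t x 0 ?p q 0 0 w
          + B1 (T t x 0) (X t x 0) * newUx T X U t x 0 ?p q"
        unfolding maps_equation_def by blast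
      with equation_residual[where ?A1.0 = A1 and ?A2.0 = A2 and ?B1.0 = B1 and ?B2.0 = B2 and r = 0 and s = 0, OF constraint]
        deriv_Tf_nonzero[of t] U1_nonzero[of t]
      show "?residual t x q w = 0" by simp
    qed
  next
    assume "\<forall>t x q w. ?residual t x q w = 0"
    with equation_residual[where ?A1.0 = A1 and ?A2.0 = A2 and ?B1.0 = B1 and ?B2.0 = B2]
    show "maps_equation T X U A1 A2 B1 B2"
      unfolding maps_equation_def by (metis div_0 eq_iff_diff_eq_0)
  qed
  then show ?thesis
    by (simp only: affine_combination_eq_zero_iff[OF U1_nonzero nondegenerate])
qed

lemma maps_equation_iff:
  "maps_equation T X U A1 A2 B1 B2 \<longleftrightarrow> equivalence_conditions Tf X0 U0 U1 A1 A2 B1 B2"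
  unfolding maps_equation_iff_defects_eq_0 equivalence_conditions_def
    B2_defect_def B1_defect_def U0_defect_def
  using deriv_Tf_nonzero by (auto simp: field_simps)

end

section \<open>Transformations between equations of the class\<close>

locale form_preserving =
  fixes A1 A2 B1 B2 :: "real \<Rightarrow> real \<Rightarrow> real"
    and T X U :: "real \<Rightarrow> real \<Rightarrow> real \<Rightarrow> real"
  assumes point_transformation: "point_transformation T X U"
    and maps_equation: "maps_equation T X U A1 A2 B1 B2"
    and A2_nonzero: "A2 t x \<noteq> 0"
    and B2_nonzero: "B2 t x \<noteq> 0"
begin

lemma smooth: "smooth3 T" "smooth3 X" "smooth3 U"
  and jacobian_det_nonzero: "jacobian_det T X U t x u \<noteq> 0"
  using point_transformation unfolding point_transformation_iff by auto

lemma transformed_equation: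
  assumes "jacD T X t x u p q \<noteq> 0" and "p + u * q = A2 t x * w + A1 t x * q"
  shows "newUt T X U t x u p q + U t x u * newUx T X U t x u p q
    = B2 (T t x u) (X t x u) * newUxx T X U t x u p q r s w
    + B1 (T t x u) (X t x u) * newUx T X U t x u p q"
  using maps_equation assms unfolding maps_equation_def by blast

lemma Dx1_T_eq_0:
  assumes J: "jacD T X t x u p q \<noteq> 0"
  shows "Dx1 T t x u p q = 0"
proof -
  define w where "w = (p - (A1 t x - u) * q) / A2 t x"
  have constraint: "p + u * q = A2 t x * w + A1 t x * q"
    unfolding w_def using A2_nonzero[of t x] by (simp add: field_simps)
  have "newUxx T X U t x u p q 1 0 w - newUxx T X U t x u p q 0 0 w = 0"
    using transformed_equation[OF J constraint, of 1 0] transformed_equation[OF J constraint, of 0 0]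
    by (simp add: B2_nonzero)
  then have "Dx1 T t x u p q * deriv (\<lambda>a. newUx T X U t x u a q) p = 0"
    using J by (simp add: newUxx_r_slope)
  then have "Dx1 T t x u p q * (Dx1 T t x u p q * jacobian_det T X U t x u) = 0"
    using J by (simp add: deriv_newUx_p)
  then show ?thesis
    using jacobian_det_nonzero by simp
qed

lemma px_T_eq_0: "px T t x u = 0" and pu_T_eq_0: "pu T t x u = 0"
proof -
  have "px T t x u = 0 \<and> pu T t x u = 0"
  proof (rule affine_zero_outside_line)
    show "px T t x u + q * pu T t x u = 0" if "(pt T t x u * px X t x u - px T t x u * pt X t x u)
      + p * (pu T t x u * px X t x u - px T t x u * pu X t x u)
      + q * (pt T t x u * pu X t x u - pu T t x u * pt X t x u) \<noteq> 0" for p q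
      using Dx1_T_eq_0[of t x u p q] that unfolding jacD_affine Dx1_def by simp
    show "pt T t x u * px X t x u - px T t x u * pt X t x u \<noteq> 0
      \<or> pu T t x u * px X t x u - px T t x u * pu X t x u \<noteq> 0
      \<or> pt T t x u * pu X t x u - pu T t x u * pt X t x u \<noteq> 0"
      using jacobian_det_nonzero[of t x u] unfolding jacobian_det_eq by auto
  qed
  then show "px T t x u = 0" "pu T t x u = 0" by simp_all
qed

lemma T_eq: "T t x u = T t 0 0"
proof -
  have "T t x u = 0 * x + T t 0 u" by (rule smooth3_affine_x[OF smooth(1) px_T_eq_0])
  also have "T t 0 u = 0 * u + T t 0 0" by (rule smooth3_affine_u[OF smooth(1) pu_T_eq_0])
  finally show ?thesis by simp
qed

lemma jacD_eq: "jacD T X t x u p q = pt T t x u * (px X t x u + q * pu X t x u)"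
  unfolding jacD_def Dt1_def Dx1_def by (simp add: px_T_eq_0 pu_T_eq_0)

lemma pt_T_nonzero: "pt T t x u \<noteq> 0"
  and jacobian_minor_nonzero: "pu U t x u * px X t x u - px U t x u * pu X t x u \<noteq> 0"
  using jacobian_det_nonzero[of t x u]
  unfolding jacobian_det_def px_T_eq_0 pu_T_eq_0 by (auto simp: algebra_simps)

lemma newUx_eq:
  "newUx T X U = (\<lambda>t x u p q. (px U t x u + q * pu U t x u) / (px X t x u + q * pu X t x u))"
  using pt_T_nonzero
  by (intro ext) (simp add: newUx_def jacD_eq Dt1_def Dx1_def px_T_eq_0 pu_T_eq_0)

lemma newUt_eq:
  "newUt T X U t x u p q =
     ((pt U t x u + p * pu U t x u) * (px X t x u + q * pu X t x u)
      - (px U t x u + q * pu U t x u) * (pt X t x u + p * pu X t x u))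
     / (pt T t x u * (px X t x u + q * pu X t x u))"
  unfolding newUt_def jacD_eq Dt1_def Dx1_def ..

lemma newUxx_eq:
  assumes nonzero: "px X t x u + q * pu X t x u \<noteq> 0"
  defines "f \<equiv> px U t x u + q * pu U t x u" and "d \<equiv> px X t x u + q * pu X t x u"
  shows "newUxx T X U t x u p q r s w =
    (((px (px U) t x u + q * px (pu U) t x u) * d - f * (px (px X) t x u + q * px (pu X) t x u))
     + q * ((pu (px U) t x u + q * pu (pu U) t x u) * d - f * (pu (px X) t x u + q * pu (pu X) t x u))
     + w * (pu U t x u * d - f * pu X t x u)) / d ^ 3"
    (is "_ = (?Nx + q * ?Nu + w * ?Nq) / _")
proof -
  note smooth_partials = smooth3_partials[OF smooth(2)] smooth3_partials[OF smooth(3)]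
  have "deriv (\<lambda>y. newUx T X U t y u p q) x = ?Nx / (d * d)"
    unfolding newUx_eq f_def d_def
    by (intro DERIV_imp_deriv DERIV_divide DERIV_add DERIV_cmult smooth3_DERIV_x smooth_partials)
      (use nonzero in simp)
  moreover have "deriv (\<lambda>v. newUx T X U t x v p q) u = ?Nu / (d * d)"
    unfolding newUx_eq f_def d_def
    by (intro DERIV_imp_deriv DERIV_divide DERIV_add DERIV_cmult smooth3_DERIV_u smooth_partials)
      (use nonzero in simp)
  moreover have "deriv (\<lambda>a. newUx T X U t x u p a) q = ?Nq / (d * d)"
    unfolding newUx_eq f_def d_def
    by (rule DERIV_imp_deriv, rule DERIV_divide) (auto intro!: derivative_eq_intros simp: nonzero)
  moreover have "deriv (\<lambda>a. newUx T X U t x u a q) p = 0"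
    unfolding newUx_eq by simp
  ultimately have TDx: "TDx (newUx T X U) t x u p q r s w
      = ?Nx / (d * d) + q * (?Nu / (d * d)) + w * (?Nq / (d * d))"
    unfolding TDx_def by simp
  have "newUxx T X U t x u p q r s w = TDx (newUx T X U) t x u p q r s w / d"
    unfolding newUxx_def jacD_eq Dt1_def Dx1_def d_def
    using pt_T_nonzero[of t x u] by (simp add: px_T_eq_0 pu_T_eq_0)
  also have "\<dots> = (?Nx + q * ?Nu + w * ?Nq) / d ^ 3"
    using nonzero unfolding TDx d_def[symmetric] by (simp add: field_simps power3_eq_cube)
  finally show ?thesis .
qed

lemma A2_B2_relation:
  assumes d: "px X t x u + q * pu X t x u \<noteq> 0"
  shows "A2 t x * (px X t x u + q * pu X t x u)\<^sup>2 = pt T t x u * B2 (T t x u) (X t x u)"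
proof -
  define M where "M = pu U t x u * px X t x u - px U t x u * pu X t x u"
  define D where "D = px X t x u + q * pu X t x u"
  define p0 where "p0 = (A1 t x - u) * q"
  let ?p1 = "p0 + A2 t x * 1" and ?p0 = "p0 + A2 t x * 0"
  have J: "jacD T X t x u p q \<noteq> 0" for p
    using d pt_T_nonzero by (simp add: jacD_eq)
  have constraint: "p0 + A2 t x * w + u * q = A2 t x * w + A1 t x * q" for w
    unfolding p0_def by (simp add: algebra_simps)
  have "newUt T X U t x u ?p1 q - newUt T X U t x u ?p0 q
      = B2 (T t x u) (X t x u) * (newUxx T X U t x u ?p1 q 0 0 1 - newUxx T X U t x u ?p0 q 0 0 0)"
    using transformed_equation[OF J constraint[of 1], of 0 0] transformed_equation[OF J constraint[of 0], of 0 0]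
    unfolding newUx_eq by (simp add: algebra_simps)
  also have "newUxx T X U t x u ?p1 q 0 0 1 - newUxx T X U t x u ?p0 q 0 0 0
      = M / D ^ 3"
    unfolding newUxx_eq[OF d] M_def D_def by (simp add: diff_divide_distrib[symmetric] algebra_simps)
  finally have "A2 t x * M / (pt T t x u * D) = B2 (T t x u) (X t x u) * (M / D ^ 3)"
    unfolding newUt_eq M_def D_def by (simp add: diff_divide_distrib[symmetric] algebra_simps)
  moreover have "M \<noteq> 0"
    using jacobian_minor_nonzero unfolding M_def .
  moreover have "D \<noteq> 0"
    using d unfolding D_def .
  ultimately have "A2 t x * D\<^sup>2 = pt T t x u * B2 (T t x u) (X t x u)"
    using pt_T_nonzero[of t x u] by (simp add: field_simps power2_eq_square power3_eq_cube)
  then show ?thesis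
    unfolding D_def .
qed

lemma pu_X_eq_0: "pu X t x u = 0"
  using slope_eq_0_if_square_constant[OF A2_B2_relation A2_nonzero] .

lemma X_eq: "X t x u = X t x 0"
  using smooth3_affine_u[OF smooth(2) pu_X_eq_0, of t x u] by simp

lemma X_partials:
  "pt X t x u = pt X t x 0" "px X t x u = px X t x 0" "px (px X) t x u = px (px X) t x 0"
  "pu (px X) t x u = 0" "px (pu X) t x u = 0" "pu (pu X) t x u = 0"
proof -
  show "pt X t x u = pt X t x 0" by (rule pt_eq_if_sections_eq) (rule X_eq)
  have px_X: "px X t x u = px X t x 0" for t x u by (rule px_eq_if_sections_eq) (rule X_eq)
  then show "px X t x u = px X t x 0" .
  show "px (px X) t x u = px (px X) t x 0" by (rule px_eq_if_sections_eq) (rule px_X)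
  show "pu (px X) t x u = 0" by (rule pu_eq_0_if_constant) (rule px_X)
  show "px (pu X) t x u = 0" "pu (pu X) t x u = 0"
    by (rule px_eq_0_if_constant pu_eq_0_if_constant, rule pu_X_eq_0)+
qed

lemma px_X_nonzero: "px X t x u \<noteq> 0" and pu_U_nonzero: "pu U t x u \<noteq> 0"
  using jacobian_minor_nonzero[of t x u] by (auto simp: pu_X_eq_0)

lemma B2_eq: "B2 (T t x u) (X t x u) = A2 t x * (px X t x u)\<^sup>2 / pt T t x u"
  using A2_B2_relation[of t x u 0] px_X_nonzero[of t x u] pt_T_nonzero[of t x u]
  by (simp add: field_simps)

definition ux_coefficient :: "real \<Rightarrow> real \<Rightarrow> real \<Rightarrow> real" where
  "ux_coefficient t x u =
     (A1 t x - u) * pu U t x u * px X t x u - pu U t x u * pt X t x u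
   + pt T t x u * (U t x u - B1 (T t x u) (X t x u)) * pu U t x u
   - A2 t x * ((px (pu U) t x u + pu (px U) t x u) * px X t x u - pu U t x u * px (px X) t x u)"

definition ux_free_term :: "real \<Rightarrow> real \<Rightarrow> real \<Rightarrow> real" where
  "ux_free_term t x u =
     pt U t x u * px X t x u - px U t x u * pt X t x u
   + pt T t x u * (U t x u - B1 (T t x u) (X t x u)) * px U t x u
   - A2 t x * (px (px U) t x u * px X t x u - px U t x u * px (px X) t x u)"

lemma determining_equation:
  "- A2 t x * pu (pu U) t x u * px X t x u * q\<^sup>2 + ux_coefficient t x u * q + ux_free_term t x u = 0"
  (is "?R = 0")
proof -
  define p where "p = (A1 t x - u) * q"
  have constraint: "p + u * q = A2 t x * 0 + A1 t x * q"
    unfolding p_def by (simp add: algebra_simps)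
  have d: "px X t x u + q * pu X t x u \<noteq> 0"
    using px_X_nonzero by (simp add: pu_X_eq_0)
  then have J: "jacD T X t x u p q \<noteq> 0"
    using pt_T_nonzero by (simp add: jacD_eq)
  let ?residual = "newUt T X U t x u p q + U t x u * newUx T X U t x u p q
    - (B2 (T t x u) (X t x u) * newUxx T X U t x u p q 0 0 0 + B1 (T t x u) (X t x u) * newUx T X U t x u p q)"
  from transformed_equation[OF J constraint, of 0 0] have "?residual = 0"
    by simp
  moreover have "?residual = ?R / (pt T t x u * px X t x u)"
    using pt_T_nonzero[of t x u] px_X_nonzero[of t x u]
    unfolding newUt_eq newUx_eq newUxx_eq[OF d] B2_eq X_partials(4-6) pu_X_eq_0 p_def
      ux_coefficient_def ux_free_term_def
    by (simp add: field_simps power2_eq_square power3_eq_cube)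
  ultimately show ?thesis
    using pt_T_nonzero[of t x u] px_X_nonzero[of t x u] by simp
qed

lemma pu_pu_U_eq_0: "pu (pu U) t x u = 0"
  and ux_coefficient_eq_0: "ux_coefficient t x u = 0"
  and ux_free_term_eq_0: "ux_free_term t x u = 0"
proof -
  note coefficients = quadratic_coefficients_eq_0[of "- A2 t x * pu (pu U) t x u * px X t x u",
      OF determining_equation]
  then show "pu (pu U) t x u = 0"
    using A2_nonzero[of t x] px_X_nonzero[of t x u] by simp
  from coefficients show "ux_coefficient t x u = 0" "ux_free_term t x u = 0" by simp_all
qed

lemma T_u_independent: "T t x u = T t x 0" and pt_T_u_independent: "pt T t x u = pt T t x 0"
proof -
  show T: "T t x u = T t x 0" for t x u
    using T_eq[of t x u] T_eq[of t x 0] by simp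
  show "pt T t x u = pt T t x 0" by (rule pt_eq_if_sections_eq) (rule T)
qed

lemma pu_U_eq: "pu U t x u = pu U t x 0"
  using smooth3_affine_u[OF smooth3_partials(3)[OF smooth(3)] pu_pu_U_eq_0, of t x u] by simp

lemma U_eq: "U t x u = pu U t x 0 * u + U t x 0"
  by (rule smooth3_affine_u[OF smooth(3) pu_U_eq])

lemma U_partials:
  "pt U t x u = pt (pu U) t x 0 * u + pt U t x 0"
  "px U t x u = px (pu U) t x 0 * u + px U t x 0"
  "px (px U) t x u = px (px (pu U)) t x 0 * u + px (px U) t x 0"
  "px (pu U) t x u = px (pu U) t x 0"
  "pu (px U) t x u = px (pu U) t x 0"
proof -
  note smooth_U = smooth(3) smooth3_partials[OF smooth(3)]
    smooth3_partials(2)[OF smooth3_partials(3)[OF smooth(3)]]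
  have "((\<lambda>s. pu U s x 0 * u + U s x 0) has_real_derivative pt (pu U) t x 0 * u + pt U t x 0) (at t)"
    by (intro DERIV_add DERIV_cmult_right smooth3_DERIV_t smooth_U)
  then show "pt U t x u = pt (pu U) t x 0 * u + pt U t x 0"
    unfolding pt_def by (subst U_eq) (rule DERIV_imp_deriv)
  have px_U: "px U t x u = px (pu U) t x 0 * u + px U t x 0" for x u
  proof -
    have "((\<lambda>y. pu U t y 0 * u + U t y 0) has_real_derivative px (pu U) t x 0 * u + px U t x 0) (at x)"
      by (intro DERIV_add DERIV_cmult_right smooth3_DERIV_x smooth_U)
    then show ?thesis
      unfolding px_def by (subst U_eq) (rule DERIV_imp_deriv)
  qed
  then show "px U t x u = px (pu U) t x 0 * u + px U t x 0" .
  have "((\<lambda>y. px (pu U) t y 0 * u + px U t y 0) has_real_derivative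
      px (px (pu U)) t x 0 * u + px (px U) t x 0) (at x)"
    by (intro DERIV_add DERIV_cmult_right smooth3_DERIV_x smooth_U)
  then show "px (px U) t x u = px (px (pu U)) t x 0 * u + px (px U) t x 0"
    unfolding px_def[of "px U"] by (subst px_U) (rule DERIV_imp_deriv)
  show "px (pu U) t x u = px (pu U) t x 0"
    by (rule px_eq_if_sections_eq) (rule pu_U_eq)
  have "(\<lambda>v. px U t x v) = (\<lambda>v. px (pu U) t x 0 * v + px U t x 0)"
    by (rule ext) (rule px_U)
  moreover have "((\<lambda>v. px (pu U) t x 0 * v + px U t x 0) has_real_derivative px (pu U) t x 0) (at u)"
    by (auto intro!: derivative_eq_intros)
  ultimately show "pu (px U) t x u = px (pu U) t x 0"
    unfolding pu_def by (metis DERIV_imp_deriv)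
qed

lemmas u_independent =
  T_u_independent pt_T_u_independent X_eq X_partials(1-3) pu_U_eq U_partials(4-5)

lemma px_X_eq: "px X t x 0 = pt T t x 0 * pu U t x 0"
proof -
  have "ux_coefficient t x 1 - ux_coefficient t x 0
      = pu U t x 0 * (pt T t x 0 * pu U t x 0 - px X t x 0)"
    unfolding ux_coefficient_def u_independent[of t x 1] U_eq[of t x 1] U_partials(5)[of t x 0]
    by (simp add: algebra_simps)
  then show ?thesis
    using ux_coefficient_eq_0 pu_U_nonzero[of t x 0] by simp
qed

lemma px_pu_U_eq_0: "px (pu U) t x 0 = 0"
proof -
  have "ux_free_term t x 1 + ux_free_term t x (- 1) - 2 * ux_free_term t x 0
      = 2 * pt T t x 0 * pu U t x 0 * px (pu U) t x 0"
    unfolding ux_free_term_def u_independent[of t x 1] u_independent[of t x "- 1"]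
      U_eq[of t x 1] U_eq[of t x "- 1"] U_partials(1-3)[of t x 1] U_partials(1-3)[of t x "- 1"]
    by (simp add: algebra_simps)
  then show ?thesis
    using ux_free_term_eq_0 pt_T_nonzero[of t x 0] pu_U_nonzero[of t x 0] by simp
qed

lemma px_U_eq: "px U t x 0 = - pt (pu U) t x 0"
proof -
  have "px (px (pu U)) t x 0 = 0"
    by (rule px_eq_0_if_constant) (rule px_pu_U_eq_0)
  then have "ux_free_term t x 1 - ux_free_term t x (- 1)
      = 2 * pt T t x 0 * pu U t x 0 * (pt (pu U) t x 0 + px U t x 0)"
    unfolding ux_free_term_def u_independent[of t x 1] u_independent[of t x "- 1"]
      U_eq[of t x 1] U_eq[of t x "- 1"] U_partials(1-3)[of t x 1] U_partials(1-3)[of t x "- 1"]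
      px_pu_U_eq_0 px_X_eq
    by (simp add: algebra_simps)
  then show ?thesis
    using ux_free_term_eq_0 pt_T_nonzero[of t x 0] pu_U_nonzero[of t x 0] by simp
qed

lemma normal_form_exists: "\<exists>Tf X0 U0 U1. normal_form Tf X0 U0 U1 T X U"
proof -
  define Tf X0 U0 U1 where "Tf t = T t 0 0" and "X0 t = X t 0 0" and "U0 t = U t 0 0"
    and "U1 t = pu U t 0 0" for t
  have pu_U: "pu U t x 0 = U1 t" for t x
    using smooth3_affine_x[OF smooth3_partials(3)[OF smooth(3)] px_pu_U_eq_0, of t x]
    unfolding U1_def by simp
  have T: "T t x u = Tf t" for t x u
    unfolding Tf_def by (rule T_eq)
  have pt_T: "pt T t x u = deriv Tf t" for t x u
    unfolding pt_def T ..
  have pt_pu_U: "pt (pu U) t x 0 = deriv U1 t" for t x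
    unfolding pt_def pu_U ..
  have X: "X t x u = deriv Tf t * U1 t * x + X0 t" for t x u
    using X_eq[of t x u] smooth3_affine_x[OF smooth(2), of t 0 "deriv Tf t * U1 t" x]
    unfolding X0_def px_X_eq pt_T pu_U by simp
  have U: "U t x u = U1 t * u - deriv U1 t * x + U0 t" for t x u
    using U_eq[of t x u] smooth3_affine_x[OF smooth(3), of t 0 "- deriv U1 t" x]
    unfolding U0_def px_U_eq pt_pu_U pu_U by simp
  have "normal_form Tf X0 U0 U1 T X U"
  proof
    show "smooth1 Tf" "smooth1 X0" "smooth1 U0" "smooth1 U1"
      unfolding Tf_def X0_def U0_def U1_def
      using smooth smooth3_partials(3)[OF smooth(3)] by (auto intro: smooth3_imp_smooth1_t)
    show "deriv Tf t * U1 t \<noteq> 0" for t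
      using pt_T_nonzero[of t 0 0] pu_U_nonzero[of t 0 0] unfolding pt_T pu_U by simp
    show "in_normal_form Tf X0 U0 U1 T X U"
      unfolding in_normal_form_def using T X U by blast
  qed
  then show ?thesis by blast
qed

end

theorem proposition5:
  fixes A1 A2 B1 B2 :: "real \<Rightarrow> real \<Rightarrow> real"
    and T X U :: "real \<Rightarrow> real \<Rightarrow> real \<Rightarrow> real"
  assumes "in_class_L A1 A2"
    and "in_class_L B1 B2"
    and "point_transformation T X U"
  shows "maps_equation T X U A1 A2 B1 B2 \<longleftrightarrow>
    (\<exists>Tf X0 U0 U1 :: real \<Rightarrow> real.
       smooth1 Tf \<and> smooth1 X0 \<and> smooth1 U0 \<and> smooth1 U1 \<and>
       (\<forall>t. deriv Tf t * U1 t \<noteq> 0) \<and>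
       (\<forall>t x u. T t x u = Tf t \<and>
                X t x u = deriv Tf t * U1 t * x + X0 t \<and>
                U t x u = U1 t * u - deriv U1 t * x + U0 t) \<and>
       (\<forall>t x. deriv (deriv U1) t * x - deriv U0 t = A1 t x * deriv U1 t) \<and>
       (\<forall>t x. B1 (Tf t) (deriv Tf t * U1 t * x + X0 t)
                = U1 t * A1 t x - deriv U1 t * x + U0 t
                  - (deriv (\<lambda>s. deriv Tf s * U1 s) t * x + deriv X0 t) / deriv Tf t) \<and>
       (\<forall>t x. B2 (Tf t) (deriv Tf t * U1 t * x + X0 t)
                = deriv Tf t * (U1 t)\<^sup>2 * A2 t x))"
proof -
  have "maps_equation T X U A1 A2 B1 B2 \<longleftrightarrow>
    (\<exists>Tf X0 U0 U1. normal_form Tf X0 U0 U1 T X U \<and> equivalence_conditions Tf X0 U0 U1 A1 A2 B1 B2)"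
  proof
    assume maps: "maps_equation T X U A1 A2 B1 B2"
    interpret form_preserving A1 A2 B1 B2 T X U
      using assms maps unfolding in_class_L_def by unfold_locales auto
    from normal_form_exists obtain Tf X0 U0 U1 where "normal_form Tf X0 U0 U1 T X U"
      by blast
    with maps show "\<exists>Tf X0 U0 U1. normal_form Tf X0 U0 U1 T X U
        \<and> equivalence_conditions Tf X0 U0 U1 A1 A2 B1 B2"
      using normal_form.maps_equation_iff by blast
  qed (use normal_form.maps_equation_iff in blast)
  then show ?thesis
    unfolding normal_form_def in_normal_form_def equivalence_conditions_def by blast
qed

end
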